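(* Assume $X_0\in L^\infty$ and $x\in\mathbb{R}$. If $Q_0(1)\mathrm{E}[\rho]\le x$, then $v^\circ(x)=0$ and the variance-minimal quantile functions in $\mathscr{Q}_{\mathrm{icx}}(x,Q_0)$ are exactly the constant functions with value in the interval $[Q_0(1),x/\mathrm{E}[\rho]]$.
   Context: $(\Omega,\mathcal{F},\mathbb{P})$ is a complete nonatomic probability space. $\rho\in L^2$ with $\mathbb{P}(\rho>0)=1$ and $\mathrm{Var}[\rho]>0$. For a random variable $X$, $Q_X(t)=\inf\{y:\mathbb{P}(X\le y)>t\}$ for $t\in[0,1)$ and $Q_X(1):=\lim_{t\uparrow1}Q_X(t)$; $Q_0:=Q_{X_0}$. $\mathscr{Q}$ is the set of increasing, right-continuous $Q:[0,1)\to\mathbb{R}$ with $\int_0^1Q^2<\infty$. For $Q_1,Q_2\in\mathscr{Q}$, $Q_1\succeq_{\mathrm{icx}}Q_2$ means $\int_t^1Q_1\ge\int_t^1Q_2$ for all $t\in[0,1]$. $\mathrm{Var}[Q]=\int_0^1Q^2-(\int_0^1Q)^2$. $\mathscr{Q}_{\mathrm{icx}}(x,Q_0)=\{Q\in\mathscr{Q}:\int_0^1Q(s)Q_\rho(1-s)ds\le x,\ Q\succeq_{\mathrm{icx}}Q_0\}$; a variance-minimal quantile function is a minimizer of $\mathrm{Var}[Q]$ over this set, and $v^\circ(x)$ is the minimal value. *)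

theory Defs
  imports "HOL-Probability.Probability"
begin

definition nonatomic :: "'a measure \<Rightarrow> bool" where
  "nonatomic M \<longleftrightarrow> (\<forall>A\<in>sets M. measure M A > 0 \<longrightarrow>
      (\<exists>B\<in>sets M. B \<subseteq> A \<and> 0 < measure M B \<and> measure M B < measure M A))"

definition quantile :: "'a measure \<Rightarrow> ('a \<Rightarrow> real) \<Rightarrow> real \<Rightarrow> real" where
  "quantile M X t = Inf {y. measure M {\<omega>\<in>space M. X \<omega> \<le> y} > t}"

definition quantile_one :: "'a measure \<Rightarrow> ('a \<Rightarrow> real) \<Rightarrow> real" where
  "quantile_one M X = Lim (at_left (1::real)) (quantile M X)"

(* The set \<Q>: increasing, right-continuous Q on [0,1) with \<integral>_0^1 Q^2 < \<infinity>.
   Quantile functions are represented as real \<Rightarrow> real; only values on [0,1) matter. *)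
definition quantile_space :: "(real \<Rightarrow> real) set" where
  "quantile_space = {Q. mono_on {0..<1} Q
      \<and> (\<forall>t\<in>{0..<1}. continuous (at_right t) Q)
      \<and> set_integrable lborel {0..<1} (\<lambda>s. (Q s)\<^sup>2)}"

definition icx_ge :: "(real \<Rightarrow> real) \<Rightarrow> (real \<Rightarrow> real) \<Rightarrow> bool" where
  "icx_ge Q1 Q2 \<longleftrightarrow> (\<forall>t\<in>{0..1}.
      (LINT s:{t..<1}|lborel. Q1 s) \<ge> (LINT s:{t..<1}|lborel. Q2 s))"

definition qvar :: "(real \<Rightarrow> real) \<Rightarrow> real" where
  "qvar Q = (LINT s:{0..<1}|lborel. (Q s)\<^sup>2) - (LINT s:{0..<1}|lborel. Q s)\<^sup>2"

definition Q_icx :: "'a measure \<Rightarrow> ('a \<Rightarrow> real) \<Rightarrow> real \<Rightarrow> (real \<Rightarrow> real) \<Rightarrow> (real \<Rightarrow> real) set" where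
  "Q_icx M \<rho> x Q0 = {Q \<in> quantile_space.
      (LINT s:{0..<1}|lborel. Q s * quantile M \<rho> (1 - s)) \<le> x \<and> icx_ge Q Q0}"

definition var_minimal :: "'a measure \<Rightarrow> ('a \<Rightarrow> real) \<Rightarrow> real \<Rightarrow> (real \<Rightarrow> real) \<Rightarrow> (real \<Rightarrow> real) \<Rightarrow> bool" where
  "var_minimal M \<rho> x Q0 Q \<longleftrightarrow> Q \<in> Q_icx M \<rho> x Q0 \<and> (\<forall>Q'\<in>Q_icx M \<rho> x Q0. qvar Q \<le> qvar Q')"

definition v_circ :: "'a measure \<Rightarrow> ('a \<Rightarrow> real) \<Rightarrow> real \<Rightarrow> (real \<Rightarrow> real) \<Rightarrow> real" where
  "v_circ M \<rho> x Q0 = Inf (qvar ` Q_icx M \<rho> x Q0)"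

end

theory Submission
  imports Defs
begin

(* A constant quantile function c has variance 0; it dominates Q_0 in the increasing convex
   order iff c \<ge> Q_0(1), because Q_0 is increasing with supremum Q_0(1); and its cost is
   \<integral> c Q_\<rho>(1 - s) ds = c E[\<rho>], because s \<mapsto> Q_\<rho>(1 - s) has the law of \<rho> under Lebesgue
   measure on (0,1). So the constant Q_0(1) is feasible and v\<^sup>\<circ>(x) = 0. Conversely a
   right-continuous Q of variance 0 is constant on [0,1), so the minimizers are exactly the
   feasible constants. *)

lemma (in prob_space) expectation_pos:
  fixes X :: "'a \<Rightarrow> real"
  assumes "integrable M X" "AE x in M. 0 < X x"
  shows "0 < expectation X"
proof -
  have "0 \<le> expectation X"
    using assms(2) by (intro integral_nonneg_AE) (auto elim: eventually_mono)
  moreover have "expectation X \<noteq> 0"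
  proof
    assume "expectation X = 0"
    then have "AE x in M. X x = 0"
      using assms by (subst integral_nonneg_eq_0_iff_AE[symmetric]) (auto elim: eventually_mono)
    with assms(2) have "AE x in M. False"
      by eventually_elim simp
    then show False
      by simp
  qed
  ultimately show ?thesis
    by simp
qed

lemma (in prob_space) variance_eq_0_imp_AE_eq:
  fixes X :: "'a \<Rightarrow> real"
  assumes "X \<in> borel_measurable M" "integrable M (\<lambda>x. (X x)\<^sup>2)" "variance X = 0"
  shows "AE x in M. X x = expectation X"
proof -
  have "integrable M X"
    using assms(1,2) by (rule square_integrable_imp_integrable)
  then have "integrable M (\<lambda>x. (X x)\<^sup>2 - 2 * expectation X * X x + (expectation X)\<^sup>2)"
    using assms(2) by auto
  then have "integrable M (\<lambda>x. (X x - expectation X)\<^sup>2)"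
    by (simp add: power2_diff algebra_simps)
  then have "AE x in M. (X x - expectation X)\<^sup>2 = 0"
    using assms(3) by (subst integral_nonneg_eq_0_iff_AE[symmetric]) auto
  then show ?thesis
    by eventually_elim simp
qed

definition cdf_quantile :: "real measure \<Rightarrow> real \<Rightarrow> real" where
  "cdf_quantile D t = Inf {y. t < cdf D y}"

lemma quantile_eq_cdf_quantile:
  assumes "X \<in> borel_measurable M"
  shows "quantile M X = cdf_quantile (distr M borel X)"
proof -
  have "cdf (distr M borel X) y = measure M {\<omega>\<in>space M. X \<omega> \<le> y}" for y
    using assms unfolding cdf_def by (subst measure_distr) (auto intro!: arg_cong2[where f=measure])
  then show ?thesis unfolding quantile_def cdf_quantile_def by simp
qed

context real_distribution
begin

lemma cdf_quantile_level_set: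
  assumes "0 < t" "t < 1"
  shows "bdd_below {y. t < cdf M y}" and "{y. t < cdf M y} \<noteq> {}"
proof -
  obtain y0 where y0: "cdf M y0 < t"
    using order_tendstoD(2)[OF cdf_lim_at_bot \<open>0 < t\<close>]
    by (metis eventually_happens' trivial_limit_at_bot_linorder)
  show "bdd_below {y. t < cdf M y}"
    using y0 cdf_nondecreasing
    by (intro bdd_belowI[of _ y0]) (metis linorder_le_cases mem_Collect_eq not_less order.strict_trans)
  show "{y. t < cdf M y} \<noteq> {}"
    using order_tendstoD(1)[OF cdf_lim_at_top_prob \<open>t < 1\<close>]
    by (metis Collect_empty_eq eventually_happens' trivial_limit_at_top_linorder)
qed

lemma cdf_quantile_le:
  assumes "0 < t" "t < 1" "t < cdf M x"
  shows "cdf_quantile M t \<le> x"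
  unfolding cdf_quantile_def using cdf_quantile_level_set assms by (intro cInf_lower) auto

lemma le_cdf_if_cdf_quantile_le:
  assumes t: "0 < t" "t < 1" and le: "cdf_quantile M t \<le> x"
  shows "t \<le> cdf M x"
proof (rule ccontr)
  assume "\<not> t \<le> cdf M x"
  then have "eventually (\<lambda>y. cdf M y < t) (at_right x)"
    using cdf_is_right_cont[of x] by (auto simp: continuous_within intro: order_tendstoD(2))
  then obtain b where "x < b" and b: "\<And>y. x < y \<Longrightarrow> y < b \<Longrightarrow> cdf M y < t"
    by (auto simp: eventually_at_right[of x "x + 1"])
  have "(x + b) / 2 \<le> cdf_quantile M t"
    unfolding cdf_quantile_def
  proof (rule cInf_greatest)
    show "{y. t < cdf M y} \<noteq> {}"
      using cdf_quantile_level_set t by auto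
    fix z assume "z \<in> {y. t < cdf M y}"
    then have "cdf M ((x + b) / 2) < cdf M z"
      using b[of "(x + b) / 2"] \<open>x < b\<close> by simp
    then show "(x + b) / 2 \<le> z"
      using cdf_nondecreasing[of z "(x + b) / 2"] by linarith
  qed
  then show False
    using le \<open>x < b\<close> by auto
qed

lemma mono_on_cdf_quantile: "mono_on {0<..<1} (cdf_quantile M)"
proof (rule mono_onI)
  fix r s :: real assume "r \<in> {0<..<1}" "s \<in> {0<..<1}" "r \<le> s"
  then show "cdf_quantile M r \<le> cdf_quantile M s"
    unfolding cdf_quantile_def
    using cdf_quantile_level_set[of r] cdf_quantile_level_set[of s]
    by (intro cInf_superset_mono) auto
qed

lemma measurable_reflected_cdf_quantile:
  "(\<lambda>s. cdf_quantile M (1 - s)) \<in> borel_measurable (restrict_space lborel {0<..<1})"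
proof -
  have "mono_on {0<..<1} (\<lambda>s. - cdf_quantile M (1 - s))"
    by (intro mono_onI) (auto intro: mono_onD[OF mono_on_cdf_quantile])
  then have "(\<lambda>s. - (- cdf_quantile M (1 - s))) \<in> borel_measurable (restrict_space borel {0<..<1})"
    by (intro borel_measurable_uminus borel_measurable_mono_on_fnc)
  then show ?thesis
    by (simp add: measurable_cong_sets[OF sets_restrict_space_cong[OF sets_lborel] refl])
qed

lemma distr_reflected_cdf_quantile:
  "distr (restrict_space lborel {0<..<1}) borel (\<lambda>s. cdf_quantile M (1 - s)) = M"
  (is "distr ?U borel ?g = M")
proof (intro cdf_unique ext)
  interpret U: prob_space ?U
    by (auto simp: emeasure_restrict_space space_restrict_space intro!: prob_spaceI)
  show "real_distribution (distr ?U borel ?g)"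
    using measurable_reflected_cdf_quantile by (simp add: U.real_distribution_distr)
  show "real_distribution M" ..
  fix x
  have F: "0 \<le> cdf M x" "cdf M x \<le> 1"
    using cdf_nonneg cdf_bounded_prob by auto
  \<comment> \<open>The two bounds relating \<open>cdf_quantile\<close> and \<open>cdf\<close> leave only the point \<open>1 - cdf M x\<close> undecided.\<close>
  have "?g s \<le> x \<longleftrightarrow> s \<in> {1 - cdf M x<..<1}" if "s \<in> {0<..<1}" "s \<noteq> 1 - cdf M x" for s
    using that cdf_quantile_le[of "1 - s" x] le_cdf_if_cdf_quantile_le[of "1 - s" x] by auto
  then have AE_eq: "AE s in ?U. ?g s \<le> x \<longleftrightarrow> s \<in> {1 - cdf M x<..<1}"
    using AE_lborel_singleton[of "1 - cdf M x"]
    by (auto simp: AE_restrict_space_iff elim!: eventually_mono)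
  have "emeasure ?U {s \<in> space ?U. ?g s \<le> x} = emeasure ?U {1 - cdf M x<..<1}"
  proof (rule emeasure_eq_AE)
    show "{s \<in> space ?U. ?g s \<le> x} \<in> sets ?U"
      using measurable_reflected_cdf_quantile by measurable
    show "{1 - cdf M x<..<1} \<in> sets ?U"
      using F by (auto simp: sets_restrict_space_iff)
    show "AE s in ?U. s \<in> {s \<in> space ?U. ?g s \<le> x} \<longleftrightarrow> s \<in> {1 - cdf M x<..<1}"
      using AE_eq F by (auto simp: space_restrict_space elim!: eventually_mono)
  qed
  have "cdf (distr ?U borel ?g) x = measure ?U {s \<in> space ?U. ?g s \<le> x}"
    using measurable_reflected_cdf_quantile
    by (simp add: cdf_def measure_distr vimage_def Int_def conj_commute)
  also have "\<dots> = measure ?U {1 - cdf M x<..<1}"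
    using \<open>emeasure ?U _ = _\<close> by (simp add: measure_def)
  also have "\<dots> = cdf M x"
    using F by (subst measure_restrict_space) auto
  finally show "cdf (distr ?U borel ?g) x = cdf M x" .
qed

lemma set_integral_reflected_cdf_quantile:
  assumes "integrable M (\<lambda>x. x)"
  shows "set_integrable lborel {0..<1} (\<lambda>s. cdf_quantile M (1 - s))"
    and "(LINT s:{0..<1}|lborel. cdf_quantile M (1 - s)) = expectation (\<lambda>x. x)"
proof -
  let ?U = "restrict_space lborel {0<..<1::real}" and ?g = "\<lambda>s. cdf_quantile M (1 - s)"
  have Ioo_Ico: "set_integrable lborel {0<..<1} ?g \<longleftrightarrow> set_integrable lborel {0..<1} ?g"
    "(LINT s:{0<..<1}|lborel. ?g s) = (LINT s:{0..<1}|lborel. ?g s)"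
    by (rule set_integrable_discrete_difference[where X="{0}"] set_integral_discrete_difference[where X="{0}"];
        auto)+
  have "integrable (distr ?U borel ?g) (\<lambda>x. x)"
    using assms by (simp add: distr_reflected_cdf_quantile)
  then have "integrable ?U ?g"
    using measurable_reflected_cdf_quantile by (simp add: integrable_distr_eq)
  then show "set_integrable lborel {0..<1} ?g"
    using Ioo_Ico(1) by (simp add: set_integrable_def integrable_restrict_space)
  have "expectation (\<lambda>x. x) = integral\<^sup>L (distr ?U borel ?g) (\<lambda>x. x)"
    by (simp add: distr_reflected_cdf_quantile)
  also have "\<dots> = integral\<^sup>L ?U ?g"
    using measurable_reflected_cdf_quantile by (simp add: integral_distr)
  also have "\<dots> = (LINT s:{0..<1}|lborel. ?g s)"
    using Ioo_Ico(2) by (simp add: set_lebesgue_integral_def integral_restrict_space)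
  finally show "(LINT s:{0..<1}|lborel. ?g s) = expectation (\<lambda>x. x)" ..
qed

end

lemma (in prob_space) set_integral_reflected_quantile:
  assumes "integrable M X"
  shows "set_integrable lborel {0..<1} (\<lambda>s. quantile M X (1 - s))"
    and "(LINT s:{0..<1}|lborel. quantile M X (1 - s)) = expectation X"
proof -
  have X: "X \<in> borel_measurable M"
    using assms by simp
  interpret D: real_distribution "distr M borel X"
    using X by (rule real_distribution_distr)
  have "integrable (distr M borel X) (\<lambda>x. x)"
    using assms X by (simp add: integrable_distr_eq)
  moreover have "D.expectation (\<lambda>x. x) = expectation X"
    using X by (simp add: integral_distr)
  ultimately show "set_integrable lborel {0..<1} (\<lambda>s. quantile M X (1 - s))"
    and "(LINT s:{0..<1}|lborel. quantile M X (1 - s)) = expectation X"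
    using D.set_integral_reflected_cdf_quantile by (simp_all add: quantile_eq_cdf_quantile[OF X])
qed

context prob_space
begin

lemma quantile_level_set_bounds:
  fixes X :: "'a \<Rightarrow> real"
  assumes "X \<in> borel_measurable M" "AE \<omega> in M. \<bar>X \<omega>\<bar> \<le> C" "t \<in> {0..<1}"
  shows "C \<in> {y. t < prob {\<omega>\<in>space M. X \<omega> \<le> y}}"
    and "y \<in> {y. t < prob {\<omega>\<in>space M. X \<omega> \<le> y}} \<Longrightarrow> -C \<le> y"
proof -
  have "AE \<omega> in M. X \<omega> \<le> C"
    using assms(2) by eventually_elim auto
  then have "prob {\<omega>\<in>space M. X \<omega> \<le> C} = 1"
    using assms(1) by (subst prob_Collect_eq_1) auto
  then show "C \<in> {y. t < prob {\<omega>\<in>space M. X \<omega> \<le> y}}"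
    using assms(3) by simp
  assume y: "y \<in> {y. t < prob {\<omega>\<in>space M. X \<omega> \<le> y}}"
  show "-C \<le> y"
  proof (rule ccontr)
    assume "\<not> -C \<le> y"
    from assms(2) have "AE \<omega> in M. \<not> X \<omega> \<le> y"
      by eventually_elim (use \<open>\<not> -C \<le> y\<close> in auto)
    then have "prob {\<omega>\<in>space M. X \<omega> \<le> y} = 0"
      using assms(1) by (subst prob_Collect_eq_0) auto
    then show False
      using y assms(3) by simp
  qed
qed

lemma abs_quantile_le:
  assumes "X \<in> borel_measurable M" "AE \<omega> in M. \<bar>X \<omega>\<bar> \<le> C" "t \<in> {0..<1}"
  shows "\<bar>quantile M X t\<bar> \<le> C"
  using quantile_level_set_bounds[OF assms]
  unfolding quantile_def abs_le_iff
  by (metis (no_types, lifting) bdd_belowI cInf_greatest cInf_lower empty_iff minus_le_iff)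

lemma mono_on_quantile:
  assumes "X \<in> borel_measurable M" "AE \<omega> in M. \<bar>X \<omega>\<bar> \<le> C"
  shows "mono_on {0..<1} (quantile M X)"
proof (rule mono_onI)
  fix r s :: real assume "r \<in> {0..<1}" "s \<in> {0..<1}" "r \<le> s"
  then show "quantile M X r \<le> quantile M X s"
    unfolding quantile_def
    using quantile_level_set_bounds[OF assms, of r] quantile_level_set_bounds[OF assms, of s]
    by (intro cInf_superset_mono) (auto intro: bdd_belowI[of _ "-C"])
qed

lemma quantile_one_eq_SUP:
  assumes "X \<in> borel_measurable M" "AE \<omega> in M. \<bar>X \<omega>\<bar> \<le> C"
  shows "quantile_one M X = (SUP t\<in>{0..<1}. quantile M X t)"
proof -
  let ?Q = "quantile M X"
  have bdd: "bdd_above (?Q ` {0..<1})"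
    using abs_quantile_le[OF assms] by (intro bdd_aboveI[of _ C]) force
  have "(?Q \<longlongrightarrow> (SUP t\<in>{0..<1}. ?Q t)) (at_left 1)"
  proof (rule increasing_tendsto)
    show "eventually (\<lambda>t. ?Q t \<le> (SUP t\<in>{0..<1}. ?Q t)) (at_left 1)"
      using eventually_at_left_real[of 0 1] by (auto elim!: eventually_mono intro: cSUP_upper bdd)
    fix y assume "y < (SUP t\<in>{0..<1}. ?Q t)"
    then obtain t0 where t0: "t0 \<in> {0..<1}" "y < ?Q t0"
      using less_cSUP_iff[OF _ bdd] by auto
    show "eventually (\<lambda>t. y < ?Q t) (at_left 1)"
      using eventually_at_left_real[of t0 1] t0 mono_onD[OF mono_on_quantile[OF assms], of t0]
      by (auto elim!: eventually_mono intro: less_le_trans)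
  qed
  then show ?thesis
    unfolding quantile_one_def by (intro tendsto_Lim) auto
qed

end

lemma prob_space_unit_interval: "prob_space (restrict_space lborel {0..<1::real})"
  by (auto simp: emeasure_restrict_space space_restrict_space intro!: prob_spaceI)

lemma right_continuous_AE_eq_imp_eq:
  fixes f :: "real \<Rightarrow> real"
  assumes cont: "\<And>t. t \<in> {a..<b} \<Longrightarrow> continuous (at_right t) f"
    and AE_eq: "AE s in lborel. s \<in> {a..<b} \<longrightarrow> f s = c"
    and t: "t \<in> {a..<b}"
  shows "f t = c"
proof (rule ccontr)
  assume "f t \<noteq> c"
  then have "eventually (\<lambda>s. f s \<noteq> c) (at_right t)"
    using cont[OF t] by (auto simp: continuous_within intro: tendsto_imp_eventually_ne)
  then obtain d where "t < d" and d: "\<And>s. t < s \<Longrightarrow> s < d \<Longrightarrow> f s \<noteq> c"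
    by (auto simp: eventually_at_right[of t "t + 1"])
  let ?I = "{t<..<min d b}"
  from AE_eq have "AE s in lborel. s \<notin> ?I"
    by eventually_elim (use t d in auto)
  then have "emeasure lborel ?I = 0"
    by (subst (asm) AE_iff_measurable[of ?I]) auto
  then show False
    using t \<open>t < d\<close> by (auto simp: min_def split: if_splits)
qed

lemma mono_on_measurable_unit_interval:
  fixes Q :: "real \<Rightarrow> real"
  assumes "mono_on {0..<1} Q"
  shows "Q \<in> borel_measurable (restrict_space lborel {0..<1})"
  using borel_measurable_mono_on_fnc[OF assms]
  by (simp add: measurable_cong_sets[OF sets_restrict_space_cong[OF sets_lborel] refl])

lemma quantile_space_measurable:
  "Q \<in> quantile_space \<Longrightarrow> Q \<in> borel_measurable (restrict_space lborel {0..<1})"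
  unfolding quantile_space_def by (auto intro: mono_on_measurable_unit_interval)

lemma qvar_eq_variance:
  assumes "Q \<in> quantile_space"
  shows "qvar Q = prob_space.variance (restrict_space lborel {0..<1}) Q"
    and "integrable (restrict_space lborel {0..<1}) (\<lambda>s. (Q s)\<^sup>2)"
proof -
  let ?U = "restrict_space lborel {0..<1::real}"
  interpret U: prob_space ?U
    by (rule prob_space_unit_interval)
  show sq: "integrable ?U (\<lambda>s. (Q s)\<^sup>2)"
    using assms by (simp add: quantile_space_def set_integrable_def integrable_restrict_space)
  have "integrable ?U Q"
    using quantile_space_measurable[OF assms] sq by (rule U.square_integrable_imp_integrable)
  then show "qvar Q = U.variance Q"
    using U.variance_eq sq
    by (simp add: qvar_def set_lebesgue_integral_def integral_restrict_space)
qed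

lemma qvar_nonneg: "Q \<in> quantile_space \<Longrightarrow> 0 \<le> qvar Q"
  using prob_space.variance_positive[OF prob_space_unit_interval] by (simp add: qvar_eq_variance)

lemma qvar_eq_0_iff_const:
  assumes "Q \<in> quantile_space"
  shows "qvar Q = 0 \<longleftrightarrow> (\<exists>c. \<forall>t\<in>{0..<1}. Q t = c)"
proof
  let ?U = "restrict_space lborel {0..<1::real}"
  assume "qvar Q = 0"
  then have "AE s in ?U. Q s = prob_space.expectation ?U Q"
    using assms quantile_space_measurable qvar_eq_variance
    by (intro prob_space.variance_eq_0_imp_AE_eq[OF prob_space_unit_interval]) auto
  then have "AE s in lborel. s \<in> {0..<1} \<longrightarrow> Q s = prob_space.expectation ?U Q"
    by (simp add: AE_restrict_space_iff)
  then show "\<exists>c. \<forall>t\<in>{0..<1}. Q t = c"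
    using assms unfolding quantile_space_def by (blast intro: right_continuous_AE_eq_imp_eq)
next
  assume "\<exists>c. \<forall>t\<in>{0..<1}. Q t = c"
  then obtain c where "\<forall>t\<in>{0..<1}. Q t = c" ..
  then have "(LINT s:{0..<1}|lborel. (Q s)\<^sup>2) = (LINT s:{0..<1::real}|lborel. c\<^sup>2)"
    and "(LINT s:{0..<1}|lborel. Q s) = (LINT s:{0..<1::real}|lborel. c)"
    by (auto intro!: set_lebesgue_integral_cong)
  then show "qvar Q = 0"
    by (simp add: qvar_def set_integral_const)
qed

lemma const_in_quantile_space: "(\<lambda>_. c) \<in> quantile_space"
proof -
  interpret U: prob_space "restrict_space lborel {0..<1::real}"
    by (rule prob_space_unit_interval)
  show ?thesis
    by (auto simp: quantile_space_def mono_on_def set_integrable_def integrable_restrict_space[symmetric])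
qed

lemma icx_ge_const_iff:
  assumes mono: "mono_on {0..<1} Q0" and int: "set_integrable lborel {0..<1} Q0"
    and Q: "\<forall>t\<in>{0..<1}. Q t = c"
  shows "icx_ge Q Q0 \<longleftrightarrow> (\<forall>t\<in>{0..<1}. Q0 t \<le> c)"
proof -
  have Q0_int: "set_integrable lborel {t..<1} Q0" if "t \<in> {0..1}" for t
    using that by (intro set_integrable_subset[OF int]) auto
  have const_int: "set_integrable lborel {t..<1} (\<lambda>_. a)" if "t \<in> {0..1}" for t a :: real
    unfolding set_integrable_def using that by (intro integrable_indicator) auto
  have Q_integral: "(LINT s:{t..<1}|lborel. Q s) = (LINT s:{t..<1}|lborel. c)" if "t \<in> {0..1}" for t
    using that Q by (intro set_lebesgue_integral_cong) auto
  show ?thesis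
  proof
    assume icx: "icx_ge Q Q0"
    show "\<forall>t\<in>{0..<1}. Q0 t \<le> c"
    proof
      fix t :: real assume t: "t \<in> {0..<1}"
      have "(1 - t) * Q0 t = (LINT s:{t..<1}|lborel. Q0 t)"
        using t by (simp add: set_integral_const)
      also have "\<dots> \<le> (LINT s:{t..<1}|lborel. Q0 s)"
        using t Q0_int const_int by (intro set_integral_mono) (auto intro: mono_onD[OF mono])
      also have "\<dots> \<le> (LINT s:{t..<1}|lborel. Q s)"
        using icx t unfolding icx_ge_def by simp
      also have "\<dots> = (1 - t) * c"
        using t by (simp add: Q_integral set_integral_const)
      finally show "Q0 t \<le> c"
        using t by simp
    qed
  next
    assume "\<forall>t\<in>{0..<1}. Q0 t \<le> c"
    then have "(LINT s:{t..<1}|lborel. Q0 s) \<le> (LINT s:{t..<1}|lborel. Q s)" if "t \<in> {0..1}" for t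
      unfolding Q_integral[OF that] using that Q0_int const_int by (intro set_integral_mono) auto
    then show "icx_ge Q Q0"
      unfolding icx_ge_def by blast
  qed
qed

lemma Q_icx_subset_quantile_space: "Q_icx M \<rho> x Q0 \<subseteq> quantile_space"
  by (auto simp: Q_icx_def)

lemma v_circ_eq_0:
  assumes "Q \<in> Q_icx M \<rho> x Q0" "qvar Q = 0"
  shows "v_circ M \<rho> x Q0 = 0"
  unfolding v_circ_def
proof (rule cInf_eq_minimum)
  show "0 \<in> qvar ` Q_icx M \<rho> x Q0"
    using assms by (metis image_eqI)
qed (auto dest: subsetD[OF Q_icx_subset_quantile_space] intro: qvar_nonneg)

lemma var_minimal_iff_qvar_eq_0:
  assumes "Q' \<in> Q_icx M \<rho> x Q0" "qvar Q' = 0"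
  shows "var_minimal M \<rho> x Q0 Q \<longleftrightarrow> Q \<in> Q_icx M \<rho> x Q0 \<and> qvar Q = 0"
  using assms qvar_nonneg subsetD[OF Q_icx_subset_quantile_space] unfolding var_minimal_def
  by (metis order_antisym)

context prob_space
begin

lemma set_integrable_quantile:
  fixes X :: "'a \<Rightarrow> real"
  assumes "X \<in> borel_measurable M" "AE \<omega> in M. \<bar>X \<omega>\<bar> \<le> C"
  shows "set_integrable lborel {0..<1} (quantile M X)"
proof -
  interpret U: prob_space "restrict_space lborel {0..<1::real}"
    by (rule prob_space_unit_interval)
  have "integrable (restrict_space lborel {0..<1}) (quantile M X)"
    using abs_quantile_le[OF assms] mono_on_quantile[OF assms]
    by (intro U.integrable_const_bound[of _ C])
       (auto simp: AE_restrict_space_iff intro: mono_on_measurable_unit_interval)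
  then show ?thesis
    by (simp add: set_integrable_def integrable_restrict_space)
qed

lemma icx_ge_const_quantile_iff:
  fixes X :: "'a \<Rightarrow> real"
  assumes X: "X \<in> borel_measurable M" "AE \<omega> in M. \<bar>X \<omega>\<bar> \<le> C"
    and Q: "\<forall>t\<in>{0..<1}. Q t = c"
  shows "icx_ge Q (quantile M X) \<longleftrightarrow> quantile_one M X \<le> c"
proof -
  have "bdd_above (quantile M X ` {0..<1})"
    using abs_quantile_le[OF X] by (intro bdd_aboveI[of _ C]) force
  then show ?thesis
    using icx_ge_const_iff[OF mono_on_quantile[OF X] set_integrable_quantile[OF X] Q]
    by (simp add: quantile_one_eq_SUP[OF X] cSUP_le_iff)
qed

lemma set_integral_const_mult_reflected_quantile:
  assumes "integrable M X" "\<forall>t\<in>{0..<1}. Q t = c"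
  shows "(LINT s:{0..<1}|lborel. Q s * quantile M X (1 - s)) = c * expectation X"
proof -
  have "(LINT s:{0..<1}|lborel. Q s * quantile M X (1 - s))
      = (LINT s:{0..<1}|lborel. c * quantile M X (1 - s))"
    using assms(2) by (intro set_lebesgue_integral_cong) auto
  then show ?thesis
    using set_integral_reflected_quantile[OF assms(1)] by simp
qed

lemma const_mem_Q_icx_iff:
  assumes "integrable M \<rho>" "X0 \<in> borel_measurable M" "AE \<omega> in M. \<bar>X0 \<omega>\<bar> \<le> C"
    and "\<forall>t\<in>{0..<1}. Q t = c"
  shows "Q \<in> Q_icx M \<rho> x (quantile M X0)
    \<longleftrightarrow> Q \<in> quantile_space \<and> quantile_one M X0 \<le> c \<and> c * expectation \<rho> \<le> x"
  unfolding Q_icx_def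
  using icx_ge_const_quantile_iff[OF assms(2-4)] set_integral_const_mult_reflected_quantile[OF assms(1,4)]
  by auto

end

theorem proposition4p1:
  fixes M :: "'a measure" and \<rho> X0 :: "'a \<Rightarrow> real" and x :: real
  assumes "prob_space M"
    and "complete_measure M"
    and "nonatomic M"
    and "\<rho> \<in> borel_measurable M"
    and "integrable M (\<lambda>\<omega>. (\<rho> \<omega>)\<^sup>2)"
    and "AE \<omega> in M. \<rho> \<omega> > 0"
    and "prob_space.variance M \<rho> > 0"
    and "X0 \<in> borel_measurable M"
    and "\<exists>C. AE \<omega> in M. \<bar>X0 \<omega>\<bar> \<le> C"
    and "quantile_one M X0 * prob_space.expectation M \<rho> \<le> x"
  shows "v_circ M \<rho> x (quantile M X0) = 0
    \<and> (\<forall>Q. var_minimal M \<rho> x (quantile M X0) Q \<longleftrightarrow>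
          Q \<in> quantile_space \<and>
          (\<exists>c. quantile_one M X0 \<le> c \<and> c \<le> x / prob_space.expectation M \<rho>
               \<and> (\<forall>t\<in>{0..<1}. Q t = c)))"
proof -
  interpret prob_space M by fact
  obtain C where C: "AE \<omega> in M. \<bar>X0 \<omega>\<bar> \<le> C"
    using assms(9) by blast
  have \<rho>_int: "integrable M \<rho>"
    using assms(4,5) by (rule square_integrable_imp_integrable)
  have E_pos: "0 < expectation \<rho>"
    using \<rho>_int assms(6) by (rule expectation_pos)
  have const_mem_iff: "Q \<in> Q_icx M \<rho> x (quantile M X0) \<longleftrightarrow>
      Q \<in> quantile_space \<and> quantile_one M X0 \<le> c \<and> c \<le> x / expectation \<rho>"
    if "\<forall>t\<in>{0..<1}. Q t = c" for Q c
    using const_mem_Q_icx_iff[OF \<rho>_int assms(8) C that] E_pos by (simp add: pos_le_divide_eq)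
  define L where "L = quantile_one M X0"
  have feasible: "(\<lambda>_. L) \<in> Q_icx M \<rho> x (quantile M X0)"
    using const_mem_iff[of "\<lambda>_. L" L] const_in_quantile_space assms(10) E_pos
    by (simp add: L_def pos_le_divide_eq)
  have var_L: "qvar (\<lambda>_. L) = 0"
    using qvar_eq_0_iff_const const_in_quantile_space by blast
  have "var_minimal M \<rho> x (quantile M X0) Q \<longleftrightarrow> Q \<in> quantile_space \<and>
      (\<exists>c. quantile_one M X0 \<le> c \<and> c \<le> x / expectation \<rho> \<and> (\<forall>t\<in>{0..<1}. Q t = c))" for Q
  proof (cases "Q \<in> quantile_space")
    case True
    then show ?thesis
      unfolding var_minimal_iff_qvar_eq_0[OF feasible var_L] qvar_eq_0_iff_const[OF True]
      using const_mem_iff by metis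
  qed (use Q_icx_subset_quantile_space var_minimal_def in blast)
  then show ?thesis
    using v_circ_eq_0[OF feasible var_L] by blast
qed

end
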